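(* Suppose $|2|_D=1$. Then for every $\gamma\in D$, writing $\gamma=\gamma_++\gamma_-$ with $\gamma_\pm\in D^\pm$, we have $|\gamma|_D=\max\{|\gamma_+|_D,|\gamma_-|_D\}$.
   Context: $F$ is a non-archimedean local field, $D$ the quaternion division algebra over $F$, $|x|_D=|\mathrm{Nrd}(x)|_F$. $K\subset D$ is a quadratic extension of $F$ with conjugation $\overline{\cdot}$, and $\mu\in K\setminus F$. $D^+=K=\{\gamma:\gamma\mu=\mu\gamma\}$ and $D^-=\{\gamma\in D:\gamma\mu=\overline\mu\gamma\}$; $D=D^+\oplus D^-$. *)

theory Defs
  imports Complex_Main
begin

text \<open>We work inside a division ring D (the type 'd). The base field F is the
centre of D, equipped with an absolute value v (only its values on F matter).\<close>

definition center :: "'d::division_ring set" where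
  "center = {z. \<forall>y. z * y = y * z}"

definition has_dim_over :: "'d::division_ring set \<Rightarrow> 'd set \<Rightarrow> nat \<Rightarrow> bool" where
  "has_dim_over F V n \<longleftrightarrow> (\<exists>e::nat \<Rightarrow> 'd.
      (\<forall>i<n. e i \<in> V) \<and>
      V = {(\<Sum>i<n. c i * e i) | c. \<forall>i<n. c i \<in> F} \<and>
      (\<forall>c. (\<forall>i<n. c i \<in> F) \<and> (\<Sum>i<n. c i * e i) = 0 \<longrightarrow> (\<forall>i<n. c i = 0)))"

definition integers :: "'d::division_ring set \<Rightarrow> ('d \<Rightarrow> real) \<Rightarrow> 'd set" where
  "integers F v = {x \<in> F. v x \<le> 1}"

definition residue_rel :: "'d::division_ring set \<Rightarrow> ('d \<Rightarrow> real) \<Rightarrow> ('d \<times> 'd) set" where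
  "residue_rel F v = {(x, y). x \<in> integers F v \<and> y \<in> integers F v \<and> v (x - y) < 1}"

definition residue_field :: "'d::division_ring set \<Rightarrow> ('d \<Rightarrow> real) \<Rightarrow> 'd set set" where
  "residue_field F v = integers F v // residue_rel F v"

definition nonarch_local_field :: "'d::division_ring set \<Rightarrow> ('d \<Rightarrow> real) \<Rightarrow> bool" where
  "nonarch_local_field F v \<longleftrightarrow>
     0 \<in> F \<and> 1 \<in> F \<and>
     (\<forall>x\<in>F. \<forall>y\<in>F. x + y \<in> F \<and> x * y \<in> F \<and> x * y = y * x) \<and>
     (\<forall>x\<in>F. - x \<in> F \<and> inverse x \<in> F) \<and>
     (\<forall>x\<in>F. 0 \<le> v x \<and> (v x = 0 \<longleftrightarrow> x = 0)) \<and>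
     (\<forall>x\<in>F. \<forall>y\<in>F. v (x * y) = v x * v y \<and> v (x + y) \<le> max (v x) (v y)) \<and>
     finite (residue_field F v) \<and>
     (\<exists>\<pi>\<in>F. v \<pi> = 1 / real (card (residue_field F v)) \<and>
        (\<forall>x\<in>F. x \<noteq> 0 \<longrightarrow> (\<exists>k::int. v x = v \<pi> powi k))) \<and>
     (\<forall>s::nat \<Rightarrow> 'd. (\<forall>n. s n \<in> F) \<and>
        (\<forall>e>0. \<exists>N. \<forall>m\<ge>N. \<forall>n\<ge>N. v (s m - s n) < e) \<longrightarrow>
        (\<exists>l\<in>F. \<forall>e>0. \<exists>N. \<forall>n\<ge>N. v (s n - l) < e))"

text \<open>Reduced trace and reduced norm of the quaternion algebra D over its centre:
every x satisfies its reduced characteristic polynomial X^2 - Trd(x) X + Nrd(x);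
for x in the centre it is (X - x)^2, otherwise it is the minimal polynomial of x.\<close>
definition nrd :: "'d::division_ring \<Rightarrow> 'd" where
  "nrd x = (if x \<in> center then x * x
            else (THE n. n \<in> center \<and> (\<exists>t\<in>center. x * x - t * x + n = 0)))"

definition trd :: "'d::division_ring \<Rightarrow> 'd" where
  "trd x = (if x \<in> center then x + x
            else (THE t. t \<in> center \<and> (\<exists>n\<in>center. x * x - t * x + n = 0)))"

definition qconj :: "'d::division_ring \<Rightarrow> 'd" where
  "qconj x = trd x - x"

definition absD :: "('d::division_ring \<Rightarrow> real) \<Rightarrow> 'd \<Rightarrow> real" where
  "absD v x = v (nrd x)"

definition Dplus :: "'d::division_ring \<Rightarrow> 'd set" where
  "Dplus \<mu> = {g. g * \<mu> = \<mu> * g}"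

definition Dminus :: "'d::division_ring \<Rightarrow> 'd set" where
  "Dminus \<mu> = {g. g * \<mu> = qconj \<mu> * g}"

end

theory Submission
  imports Defs
begin

text \<open>Write \<open>\<mu>\<^sup>2 = t\<mu> - n\<close> and \<open>mubar = t - \<mu>\<close>. The commutator of \<open>\<mu>\<close> with any element
  not commuting with it is a \<open>j \<noteq> 0\<close> with \<open>j\<mu> = mubar j\<close>; a dimension count shows that \<open>D\<^sup>+ = K\<close>,
  that \<open>j\<^sup>2\<close> is central and that \<open>D\<^sup>- = Kj\<close>. For \<open>a, b \<in> K\<close> the reduced norm of \<open>a + bj\<close>
  is \<open>N(a) - j\<^sup>2N(b)\<close>, so the claim is the equality case of the ultrametric inequality for
  \<open>|N(a) - j\<^sup>2N(b)|\<close>. If it failed, \<open>j\<^sup>2N(b)/N(a)\<close> would be a unit congruent to \<open>1\<close>, hence a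
  square \<open>s\<^sup>2\<close> by Hensel's lemma (this is where \<open>|2| = 1\<close> is used). Then \<open>N(sa) = j\<^sup>2N(b)\<close>,
  so the reduced norm of \<open>sa + bj\<close> vanishes, impossible in a division ring.\<close>

section \<open>The centre of \<open>D\<close> and linear dependence\<close>

lemma center_commute: "z \<in> center \<Longrightarrow> z * y = y * z"
  by (simp add: center_def)

lemma center_mult_commute: "a \<in> center \<Longrightarrow> b \<in> center \<Longrightarrow> a * b = b * a"
  by (simp add: center_commute)

lemma center_mult_left_commute: "a \<in> center \<Longrightarrow> b \<in> center \<Longrightarrow> a * (b * q) = b * (a * q)"
  by (metis center_commute mult.assoc)

lemma center_0 [simp]: "0 \<in> center"
  and center_1 [simp]: "1 \<in> center"
  by (simp_all add: center_def)

lemma center_add [simp]: "a \<in> center \<Longrightarrow> b \<in> center \<Longrightarrow> a + b \<in> center"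
  by (simp add: center_def distrib_left distrib_right)

lemma center_uminus [simp]: "a \<in> center \<Longrightarrow> - a \<in> center"
  by (simp add: center_def)

lemma center_diff [simp]: "a \<in> center \<Longrightarrow> b \<in> center \<Longrightarrow> a - b \<in> center"
  by (simp add: center_def left_diff_distrib right_diff_distrib)

lemma center_mult [simp]:
  assumes "a \<in> center" "b \<in> center"
  shows "a * b \<in> center"
proof -
  have "\<And>y. a * y = y * a" "\<And>y. b * y = y * b"
    using assms by (auto simp: center_def)
  then have "\<And>y. a * b * y = y * (a * b)"
    by (metis mult.assoc)
  then show ?thesis by (simp add: center_def)
qed

lemma center_numeral [simp]: "(numeral k :: 'd::division_ring) \<in> center"
proof -
  have "numeral k * y = y * (numeral k :: 'd)" for y
    using mult_of_nat_commute[of "numeral k" y] by simp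
  then show ?thesis by (simp add: center_def)
qed

lemma center_inverse [simp]:
  fixes a :: "'d::division_ring"
  assumes "a \<in> center"
  shows "inverse a \<in> center"
proof (cases "a = 0")
  case False
  have "inverse a * y = y * inverse a" for y
  proof -
    have "inverse a * y = inverse a * (y * a) * inverse a"
      using False by (simp add: mult.assoc)
    also have "\<dots> = inverse a * (a * y) * inverse a"
      by (simp only: center_commute[OF assms])
    also have "\<dots> = y * inverse a"
      using False by (simp add: mult.assoc[symmetric])
    finally show ?thesis .
  qed
  then show ?thesis by (simp add: center_def)
qed simp

lemma center_sum [simp]: "(\<And>i. i \<in> A \<Longrightarrow> f i \<in> center) \<Longrightarrow> sum f A \<in> center"
  by (induction A rule: infinite_finite_induct) auto

lemma dependent_remove_elimination:
  fixes x :: "'a \<Rightarrow> 'd::division_ring"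
  assumes I: "finite I" "i0 \<in> I" and r: "\<And>i. i \<in> I \<Longrightarrow> r i \<in> center"
    and c: "\<forall>i\<in>I - {i0}. c i \<in> center" "\<exists>i\<in>I - {i0}. c i \<noteq> 0"
    and rel: "(\<Sum>i\<in>I - {i0}. c i * (x i - r i * x i0)) = 0"
  shows "\<exists>c'. (\<forall>i\<in>I. c' i \<in> center) \<and> (\<exists>i\<in>I. c' i \<noteq> 0) \<and> (\<Sum>i\<in>I. c' i * x i) = 0"
proof -
  define c' where "c' i = (if i = i0 then - (\<Sum>i\<in>I - {i0}. c i * r i) else c i)" for i
  have "(\<Sum>i\<in>I - {i0}. c' i * x i) = (\<Sum>i\<in>I - {i0}. c i * x i)"
    by (intro sum.cong) (auto simp: c'_def)
  then have "(\<Sum>i\<in>I. c' i * x i) = c' i0 * x i0 + (\<Sum>i\<in>I - {i0}. c i * x i)"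
    using I by (simp add: sum.remove)
  also have "\<dots> = (\<Sum>i\<in>I - {i0}. c i * (x i - r i * x i0))"
    by (simp add: c'_def sum_distrib_right right_diff_distrib mult.assoc sum_subtractf)
  finally have "(\<Sum>i\<in>I. c' i * x i) = 0"
    using rel by simp
  moreover have "(\<Sum>i\<in>I - {i0}. c i * r i) \<in> center"
    using c(1) r by (intro center_sum center_mult) auto
  then have "\<forall>i\<in>I. c' i \<in> center"
    using c(1) by (simp add: c'_def)
  moreover have "\<exists>i\<in>I. c' i \<noteq> 0"
    using c(2) by (auto simp: c'_def)
  ultimately show ?thesis by blast
qed

lemma sum_eliminate_last:
  fixes a b e :: "nat \<Rightarrow> 'd::division_ring"
  assumes "b n \<noteq> 0"
  shows "(\<Sum>k<Suc n. a k * e k) - a n * inverse (b n) * (\<Sum>k<Suc n. b k * e k)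
    = (\<Sum>k<n. (a k - a n * inverse (b n) * b k) * e k)"
proof -
  have "(\<Sum>k<Suc n. a k * e k) - a n * inverse (b n) * (\<Sum>k<Suc n. b k * e k)
      = (\<Sum>k<Suc n. (a k - a n * inverse (b n) * b k) * e k)"
    unfolding sum_distrib_left sum_subtractf[symmetric] by (simp add: left_diff_distrib mult.assoc)
  also have "\<dots> = (\<Sum>k<n. (a k - a n * inverse (b n) * b k) * e k)"
    using assms by (simp add: mult.assoc)
  finally show ?thesis .
qed

text \<open>Gaussian elimination on the last coordinate.\<close>
lemma span_card_gt_dependent:
  fixes e :: "nat \<Rightarrow> 'd::division_ring"
  assumes "finite I" "card I > n"
    and "\<forall>i\<in>I. \<exists>a. (\<forall>k<n. a k \<in> center) \<and> x i = (\<Sum>k<n. a k * e k)"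
  shows "\<exists>c. (\<forall>i\<in>I. c i \<in> center) \<and> (\<exists>i\<in>I. c i \<noteq> 0) \<and> (\<Sum>i\<in>I. c i * x i) = 0"
  using assms
proof (induction n arbitrary: I x)
  case 0
  then obtain i0 where "i0 \<in> I" by fastforce
  then show ?case
    using 0 by (intro exI[of _ "\<lambda>i. if i = i0 then 1 else 0"]) auto
next
  case (Suc n)
  from Suc.prems(3) obtain a where
    a: "\<forall>i\<in>I. (\<forall>k<Suc n. a i k \<in> center) \<and> x i = (\<Sum>k<Suc n. a i k * e k)"
    by metis
  then have ac: "a i k \<in> center" if "i \<in> I" "k < Suc n" for i k
    using that by blast
  show ?case
  proof (cases "\<forall>i\<in>I. a i n = 0")
    case True
    then have "\<forall>i\<in>I. \<exists>b. (\<forall>k<n. b k \<in> center) \<and> x i = (\<Sum>k<n. b k * e k)"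
      using a by (intro ballI exI[of _ "a _"]) auto
    from Suc.IH[OF Suc.prems(1) _ this] Suc.prems(2) show ?thesis
      by simp
  next
    case False
    then obtain i0 where i0: "i0 \<in> I" "a i0 n \<noteq> 0" by blast
    define r where "r i = a i n * inverse (a i0 n)" for i
    have r: "r i \<in> center" if "i \<in> I" for i
      using ac that i0 by (simp add: r_def)
    have reduced: "\<forall>i\<in>I - {i0}. \<exists>b. (\<forall>k<n. b k \<in> center) \<and> x i - r i * x i0 = (\<Sum>k<n. b k * e k)"
    proof
      fix i assume "i \<in> I - {i0}"
      then have i: "i \<in> I" by simp
      show "\<exists>b. (\<forall>k<n. b k \<in> center) \<and> x i - r i * x i0 = (\<Sum>k<n. b k * e k)"
      proof (intro exI[of _ "\<lambda>k. a i k - r i * a i0 k"] conjI allI impI)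
        fix k assume "k < n"
        then have "a i k \<in> center" "a i0 k \<in> center"
          using ac i i0(1) by simp_all
        then show "a i k - r i * a i0 k \<in> center"
          using r[OF i] by simp
      next
        show "x i - r i * x i0 = (\<Sum>k<n. (a i k - r i * a i0 k) * e k)"
          using a i i0 sum_eliminate_last[where a = "a i" and b = "a i0", OF i0(2)] by (simp add: r_def)
      qed
    qed
    have "finite (I - {i0})" "n < card (I - {i0})"
      using Suc.prems(1,2) i0 by auto
    from Suc.IH[OF this reduced] obtain c where c:
      "\<forall>i\<in>I - {i0}. c i \<in> center" "\<exists>i\<in>I - {i0}. c i \<noteq> 0"
      "(\<Sum>i\<in>I - {i0}. c i * (x i - r i * x i0)) = 0"
      by blast
    from dependent_remove_elimination[OF Suc.prems(1) i0(1) r c] show ?thesis .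
  qed
qed

lemma has_dim_over_dependent:
  fixes V :: "'d::division_ring set"
  assumes "has_dim_over center V m" "finite I" "card I > m" "\<forall>i\<in>I. x i \<in> V"
  shows "\<exists>c. (\<forall>i\<in>I. c i \<in> center) \<and> (\<exists>i\<in>I. c i \<noteq> 0) \<and> (\<Sum>i\<in>I. c i * x i) = 0"
proof -
  obtain e where "V = {(\<Sum>i<m. c i * e i) | c. \<forall>i<m. c i \<in> center}"
    using assms(1) unfolding has_dim_over_def by blast
  then have "\<forall>i\<in>I. \<exists>a. (\<forall>k<m. a k \<in> center) \<and> x i = (\<Sum>k<m. a k * e k)"
    using assms(4) by blast
  from span_card_gt_dependent[OF assms(2,3) this] show ?thesis .
qed

section \<open>The quadratic subfield \<open>K = F(\<mu>)\<close>\<close>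

lemma noncentral_lin_indep:
  fixes mu :: "'d::division_ring"
  assumes "mu \<notin> center" "x \<in> center" "y \<in> center" "x + y * mu = 0"
  shows "x = 0 \<and> y = 0"
proof (cases "y = 0")
  case False
  have "mu = - (inverse y * x)"
    using assms(4) False by (metis add_eq_0_iff left_inverse mult.assoc mult_1 mult_minus_right)
  then have "mu \<in> center"
    using assms(2,3) by simp
  with assms(1) show ?thesis by blast
qed (use assms in simp)

lemma quadratic_relation_of_dim_2:
  fixes mu :: "'d::division_ring" and K :: "'d set"
  assumes K_sub: "center \<subseteq> K"
    and K_field: "\<forall>x\<in>K. \<forall>y\<in>K. x + y \<in> K \<and> x * y \<in> K \<and> - x \<in> K \<and> inverse x \<in> K"
    and K_quad: "has_dim_over center K 2"
    and mu: "mu \<in> K" "mu \<notin> center"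
  shows "\<exists>t n. t \<in> center \<and> n \<in> center \<and> mu * mu = t * mu - n"
proof -
  define x where "x i = (if i = (0::nat) then 1 else if i = 1 then mu else mu * mu)" for i
  have "\<forall>i\<in>{0,1,2}. x i \<in> K"
    using K_sub K_field mu by (auto simp: x_def)
  from has_dim_over_dependent[OF K_quad _ _ this] obtain c where
    c: "\<forall>i\<in>{0,1,2::nat}. c i \<in> center" "\<exists>i\<in>{0,1,2::nat}. c i \<noteq> 0"
       "(\<Sum>i\<in>{0,1,2::nat}. c i * x i) = 0"
    by auto
  have rel: "c 0 + c 1 * mu + c 2 * (mu * mu) = 0"
    using c(3) by (simp add: x_def add.assoc)
  have c2: "c 2 \<noteq> 0"
  proof
    assume "c 2 = 0"
    then have "c 0 = 0 \<and> c 1 = 0"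
      using rel c(1) noncentral_lin_indep[OF mu(2), of "c 0" "c 1"] by simp
    with \<open>c 2 = 0\<close> c(2) show False by auto
  qed
  have "c 2 * (mu * mu) = - c 0 - c 1 * mu"
    using rel by (simp add: algebra_simps eq_neg_iff_add_eq_0)
  then have "mu * mu = inverse (c 2) * (- c 0 - c 1 * mu)"
    using c2 by (metis left_inverse mult.assoc mult_1)
  also have "\<dots> = (- (inverse (c 2) * c 1)) * mu - inverse (c 2) * c 0"
    by (simp add: algebra_simps)
  finally show ?thesis
    using c(1) by (intro exI[of _ "- (inverse (c 2) * c 1)"] exI[of _ "inverse (c 2) * c 0"]) auto
qed

lemma quadratic_relation_unique:
  fixes x :: "'d::division_ring"
  assumes x: "x \<notin> center" and c: "T \<in> center" "N \<in> center" "T' \<in> center" "N' \<in> center"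
    and e: "x * x - T * x + N = 0" "x * x - T' * x + N' = 0"
  shows "T = T' \<and> N = N'"
proof -
  have "N' - N + (T - T') * x = 0"
    using e by (simp add: algebra_simps) (metis add.commute add_diff_eq diff_add_cancel eq_diff_eq e(1))
  then have "N' - N = 0 \<and> T - T' = 0"
    using noncentral_lin_indep[OF x, of "N' - N" "T - T'"] c by simp
  then show ?thesis by simp
qed

lemma nrd_center: "x \<in> center \<Longrightarrow> nrd x = x * x"
  by (simp add: nrd_def)

lemma nrd_trd_of_quadratic:
  fixes x :: "'d::division_ring"
  assumes x: "x \<notin> center" and c: "T \<in> center" "N \<in> center" and e: "x * x - T * x + N = 0"
  shows "nrd x = N" "trd x = T"
proof -
  have "(THE n. n \<in> center \<and> (\<exists>t\<in>center. x * x - t * x + n = 0)) = N"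
    by (rule the_equality) (use c e quadratic_relation_unique[OF x] in blast)+
  then show "nrd x = N" using x by (simp add: nrd_def)
  have "(THE t. t \<in> center \<and> (\<exists>n\<in>center. x * x - t * x + n = 0)) = T"
    by (rule the_equality) (use c e quadratic_relation_unique[OF x] in blast)+
  then show "trd x = T" using x by (simp add: trd_def)
qed

locale quadratic_element =
  fixes mu t n :: "'d::division_ring"
  assumes t_center [simp]: "t \<in> center" and n_center [simp]: "n \<in> center"
    and mu_noncentral: "mu \<notin> center" and mu_square: "mu * mu = t * mu - n"
    and two_neq_0: "(2::'d) \<noteq> 0"
begin

definition mubar :: 'd where "mubar = t - mu"
definition kelem :: "'d \<Rightarrow> 'd \<Rightarrow> 'd" where "kelem x y = x + y * mu"
definition kconj :: "'d \<Rightarrow> 'd \<Rightarrow> 'd" where "kconj x y = x + y * mubar"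
definition knorm :: "'d \<Rightarrow> 'd \<Rightarrow> 'd" where "knorm x y = x * x + x * y * t + y * y * n"

lemma mu_commute_center: "z \<in> center \<Longrightarrow> mu * z = z * mu"
  by (simp add: center_commute)

lemma mu_left_commute_center: "z \<in> center \<Longrightarrow> mu * (z * q) = z * (mu * q)"
  by (metis center_commute mult.assoc)

lemma mu_mu_mult: "mu * (mu * q) = t * (mu * q) - n * q"
  by (simp add: mult.assoc[symmetric] mu_square left_diff_distrib)

lemma qconj_mu: "qconj mu = mubar"
proof -
  have "mu * mu - t * mu + n = 0"
    by (simp add: mu_square)
  then have "trd mu = t"
    by (rule nrd_trd_of_quadratic(2)[OF mu_noncentral t_center n_center])
  then show ?thesis by (simp add: qconj_def mubar_def)
qed

lemma mubar_neq_mu: "mubar \<noteq> mu"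
proof
  assume "mubar = mu"
  then have "t = 2 * mu" by (simp add: mubar_def algebra_simps mult_2)
  then have "inverse 2 * t = (inverse 2 * 2) * mu"
    by (simp add: mult.assoc)
  then have "inverse 2 * t = mu"
    using two_neq_0 by (metis left_inverse mult_1)
  then have "mu \<in> center" by (metis t_center center_mult center_inverse center_numeral)
  with mu_noncentral show False by blast
qed

lemma kelem_0_0 [simp]: "kelem 0 0 = 0"
  by (simp add: kelem_def)

lemma kelem_eq_0_iff: "x \<in> center \<Longrightarrow> y \<in> center \<Longrightarrow> kelem x y = 0 \<longleftrightarrow> x = 0 \<and> y = 0"
  using noncentral_lin_indep[OF mu_noncentral] by (auto simp: kelem_def)

lemma kelem_in_center_iff: "x \<in> center \<Longrightarrow> y \<in> center \<Longrightarrow> kelem x y \<in> center \<longleftrightarrow> y = 0"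
proof
  assume c: "x \<in> center" "y \<in> center" "kelem x y \<in> center"
  have "(x - kelem x y) + y * mu = 0" by (simp add: kelem_def)
  then show "y = 0"
    using noncentral_lin_indep[OF mu_noncentral, of "x - kelem x y" y] c by simp
qed (simp add: kelem_def)

lemma kelem_mult:
  "x \<in> center \<Longrightarrow> y \<in> center \<Longrightarrow> z \<in> center \<Longrightarrow> w \<in> center \<Longrightarrow>
   kelem x y * kelem z w = kelem (x * z - y * w * n) (x * w + y * z + y * w * t)"
  by (simp add: kelem_def mu_commute_center mu_left_commute_center mu_mu_mult mu_square
      center_mult_commute center_mult_left_commute algebra_simps)

lemma kelem_commute:
  "x \<in> center \<Longrightarrow> y \<in> center \<Longrightarrow> z \<in> center \<Longrightarrow> w \<in> center \<Longrightarrow>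
   kelem x y * kelem z w = kelem z w * kelem x y"
  by (simp add: kelem_mult center_mult_commute center_mult_left_commute algebra_simps)

lemma mu_kelem_commute: "x \<in> center \<Longrightarrow> y \<in> center \<Longrightarrow> mu * kelem x y = kelem x y * mu"
  using kelem_commute[of 0 1 x y] by (simp add: kelem_def)

lemma kconj_eq_kelem: "kconj x y = kelem (x + y * t) (- y)"
  by (simp add: kconj_def kelem_def mubar_def algebra_simps)

lemma kelem_mult_kconj: "x \<in> center \<Longrightarrow> y \<in> center \<Longrightarrow> kelem x y * kconj x y = knorm x y"
  by (simp add: kconj_eq_kelem kelem_mult knorm_def)
    (simp add: kelem_def center_mult_commute center_mult_left_commute algebra_simps)

lemma kconj_mult_kelem: "x \<in> center \<Longrightarrow> y \<in> center \<Longrightarrow> kconj x y * kelem x y = knorm x y"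
  by (simp add: kconj_eq_kelem kelem_mult knorm_def)
    (simp add: kelem_def center_mult_commute center_mult_left_commute algebra_simps)

lemma knorm_center [simp]: "x \<in> center \<Longrightarrow> y \<in> center \<Longrightarrow> knorm x y \<in> center"
  by (simp add: knorm_def)

lemma knorm_eq_0_iff: "x \<in> center \<Longrightarrow> y \<in> center \<Longrightarrow> knorm x y = 0 \<longleftrightarrow> x = 0 \<and> y = 0"
proof
  assume c: "x \<in> center" "y \<in> center" "knorm x y = 0"
  then have "kelem x y = 0 \<or> kconj x y = 0"
    using kelem_mult_kconj by fastforce
  then show "x = 0 \<and> y = 0"
    using c kelem_eq_0_iff[of x y] kelem_eq_0_iff[of "x + y * t" "- y"] by (auto simp: kconj_eq_kelem)
qed (simp add: knorm_def)

lemma kelem_quotient: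
  assumes c: "x \<in> center" "y \<in> center" "z \<in> center" "w \<in> center"
  shows "\<exists>p\<in>center. \<exists>q\<in>center. inverse (kelem x y) * kelem z w = kelem p q"
proof -
  define m where "m = inverse (knorm x y)"
  define p q where "p = (x + y * t) * m" and "q = - y * m"
  have pq: "p \<in> center" "q \<in> center"
    using c by (simp_all add: p_def q_def m_def)
  have "inverse (kelem x y) = kconj x y * m"
  proof (cases "kelem x y = 0")
    case True
    then show ?thesis using c by (simp add: kelem_eq_0_iff knorm_def m_def kconj_def)
  next
    case False
    then have "knorm x y \<noteq> 0" using c by (simp add: kelem_eq_0_iff knorm_eq_0_iff)
    then have "kelem x y * (kconj x y * m) = 1"
      using c by (simp add: mult.assoc[symmetric] kelem_mult_kconj m_def)
    then show ?thesis by (rule inverse_unique)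
  qed
  also have "\<dots> = kelem p q"
    using mu_commute_center[of m] c
    by (simp add: kconj_eq_kelem kelem_def p_def q_def m_def distrib_right left_diff_distrib mult.assoc)
  finally have "inverse (kelem x y) * kelem z w = kelem (p * z - q * w * n) (p * w + q * z + q * w * t)"
    using pq c by (simp add: kelem_mult)
  moreover have "p * z - q * w * n \<in> center" "p * w + q * z + q * w * t \<in> center"
    using pq c by simp_all
  ultimately show ?thesis by blast
qed

section \<open>A quaternion basis \<open>1, \<mu>, j, \<mu>j\<close>\<close>

lemma mubar_kelem_commute: "x \<in> center \<Longrightarrow> y \<in> center \<Longrightarrow> mubar * kelem x y = kelem x y * mubar"
  using mu_kelem_commute[of x y] center_commute[OF t_center, of "kelem x y"]
  by (simp add: mubar_def left_diff_distrib right_diff_distrib)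

lemma mubar_intertwiner_sym: "g * mu = mubar * g \<Longrightarrow> g * mubar = mu * g"
  using center_commute[OF t_center, of g, symmetric]
  by (simp add: mubar_def right_diff_distrib left_diff_distrib)

lemma intertwiner_kelem:
  assumes j: "j * mu = mubar * j" and c: "x \<in> center" "y \<in> center"
  shows "j * kelem x y = kconj x y * j"
proof -
  have jc: "j * x = x * j" "j * y = y * j"
    by (simp_all add: center_commute[OF c(1)] center_commute[OF c(2)])
  have "j * kelem x y = j * x + (j * y) * mu"
    by (simp add: kelem_def distrib_left mult.assoc)
  also have "\<dots> = x * j + y * (j * mu)"
    by (simp add: jc mult.assoc)
  also have "\<dots> = kconj x y * j"
    by (simp add: j kconj_def distrib_right mult.assoc)
  finally show ?thesis .
qed

lemma kelem_mult_intertwiner: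
  assumes "j * mu = mubar * j" "x \<in> center" "y \<in> center"
  shows "kelem x y * j * mu = mubar * (kelem x y * j)"
proof -
  have "kelem x y * j * mu = kelem x y * mubar * j"
    using assms(1) by (simp add: mult.assoc)
  also have "\<dots> = mubar * (kelem x y * j)"
    using assms(2,3) by (simp add: mubar_kelem_commute[symmetric] mult.assoc)
  finally show ?thesis .
qed

lemma intertwiner_commuting_eq_0:
  assumes "j * mu = mubar * j" "j * mu = mu * j"
  shows "j = 0"
proof -
  have "mubar * j = mu * j"
    using assms by auto
  then show ?thesis
    using mubar_neq_mu by simp
qed

lemma exists_intertwiner: "\<exists>j. j \<noteq> 0 \<and> j * mu = mubar * j"
proof -
  obtain y where y: "mu * y \<noteq> y * mu"
    using mu_noncentral unfolding center_def by blast
  have yt: "y * t = t * y" and yn: "y * n = n * y"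
    by (simp_all add: center_commute[OF t_center] center_commute[OF n_center])
  define j where "j = mu * y - y * mu"
  have "j * mu = mu * y * mu - y * (mu * mu)"
    by (simp add: j_def algebra_simps)
  also have "\<dots> = mu * y * mu - y * t * mu + n * y"
    by (simp add: mu_square algebra_simps yn)
  also have "\<dots> = mubar * j"
    by (simp add: mubar_def j_def algebra_simps mu_mu_mult yt)
  finally have "j * mu = mubar * j" .
  moreover have "j \<noteq> 0"
    using y by (simp add: j_def)
  ultimately show ?thesis by blast
qed

lemma centralizer_kelem_relation:
  assumes D_quat: "has_dim_over center (UNIV :: 'd set) 4" and g: "g * mu = mu * g"
  shows "\<exists>a\<in>center. \<exists>b\<in>center. \<exists>c\<in>center. \<exists>d\<in>center. (c \<noteq> 0 \<or> d \<noteq> 0) \<and> kelem c d * g = kelem a b"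
proof -
  obtain j where j: "j \<noteq> 0" "j * mu = mubar * j"
    using exists_intertwiner by blast
  define X where "X i = (if i = (0::nat) then 1 else if i = 1 then mu else if i = 2 then g
      else if i = 3 then mu * g else j)" for i
  obtain c where c: "\<forall>i\<in>{0,1,2,3,4::nat}. c i \<in> center" "\<exists>i\<in>{0,1,2,3,4::nat}. c i \<noteq> 0"
      "(\<Sum>i\<in>{0,1,2,3,4::nat}. c i * X i) = 0"
    using has_dim_over_dependent[OF D_quat, of "{0,1,2,3,4::nat}" X] by auto
  have cc: "c 0 \<in> center" "c 1 \<in> center" "c 2 \<in> center" "c 3 \<in> center" "c 4 \<in> center"
    using c(1) by auto
  define P where "P = kelem (c 0) (c 1) + kelem (c 2) (c 3) * g"
  have rel: "P + kelem (c 4) 0 * j = 0"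
    using c(3) by (simp add: X_def P_def kelem_def algebra_simps)
  have "P * mu = mu * P"
    using cc by (simp add: P_def distrib_right distrib_left mult.assoc g mu_kelem_commute[symmetric])
      (simp add: mult.assoc[symmetric] mu_kelem_commute)
  moreover have "kelem (c 4) 0 * j = - P"
    using rel by (simp add: eq_neg_iff_add_eq_0 add.commute)
  ultimately have "kelem (c 4) 0 * j * mu = mu * (kelem (c 4) 0 * j)"
    by simp
  then have "kelem (c 4) 0 * j = 0"
    by (rule intertwiner_commuting_eq_0[OF kelem_mult_intertwiner[OF j(2) cc(5) center_0]])
  then have c4: "c 4 = 0"
    using j(1) kelem_eq_0_iff[OF cc(5)] by simp
  then have "kelem (c 2) (c 3) * g = - kelem (c 0) (c 1)"
    using rel by (simp add: P_def eq_neg_iff_add_eq_0 add.commute)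
  also have "\<dots> = kelem (- c 0) (- c 1)"
    by (simp add: kelem_def)
  finally have rel': "kelem (c 2) (c 3) * g = kelem (- c 0) (- c 1)" .
  moreover have "c 2 \<noteq> 0 \<or> c 3 \<noteq> 0"
  proof (rule ccontr)
    assume "\<not> (c 2 \<noteq> 0 \<or> c 3 \<noteq> 0)"
    moreover from this have "c 0 = 0 \<and> c 1 = 0"
      using rel' cc kelem_eq_0_iff[of "- c 0" "- c 1"] by simp
    ultimately show False
      using c(2) c4 by auto
  qed
  moreover have "- c 0 \<in> center" "- c 1 \<in> center"
    using cc by simp_all
  ultimately show ?thesis
    using cc by blast
qed

lemma centralizer_eq_kelem:
  assumes D_quat: "has_dim_over center (UNIV :: 'd set) 4" and g: "g * mu = mu * g"
  shows "\<exists>x\<in>center. \<exists>y\<in>center. g = kelem x y"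
proof -
  obtain a b c d where abcd: "a \<in> center" "b \<in> center" "c \<in> center" "d \<in> center"
    and cd: "c \<noteq> 0 \<or> d \<noteq> 0" and rel: "kelem c d * g = kelem a b"
    using centralizer_kelem_relation[OF D_quat g] by blast
  have "kelem c d \<noteq> 0"
    using cd kelem_eq_0_iff[OF abcd(3,4)] by simp
  then have "g = inverse (kelem c d) * kelem a b"
    using rel by (metis left_inverse mult.assoc mult_1)
  then show ?thesis
    using kelem_quotient[OF abcd(3,4,1,2)] by simp
qed

lemma exists_quaternion_basis:
  assumes D_quat: "has_dim_over center (UNIV :: 'd set) 4"
  shows "\<exists>j. j \<noteq> 0 \<and> j * mu = mubar * j \<and> j * j \<in> center"
proof -
  obtain j where j: "j \<noteq> 0" "j * mu = mubar * j"
    using exists_intertwiner by blast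
  have "j * j * mu = mu * (j * j)"
    by (simp add: mult.assoc j(2)) (simp add: mult.assoc[symmetric] mubar_intertwiner_sym[OF j(2)])
  then obtain x y where xy: "x \<in> center" "y \<in> center" "j * j = kelem x y"
    using centralizer_eq_kelem[OF D_quat] by blast
  have "kconj x y * j = kelem x y * j"
    using intertwiner_kelem[OF j(2) xy(1,2)] xy(3) by (metis mult.assoc)
  then have "kconj x y = kelem x y"
    using j(1) by simp
  then have "y * (mubar - mu) = 0"
    by (simp add: kconj_def kelem_def right_diff_distrib)
  then have "y = 0"
    using mubar_neq_mu by simp
  then show ?thesis
    using j xy by (auto simp: kelem_def)
qed

lemma anticommutant_eq_kelem_mult:
  assumes D_quat: "has_dim_over center (UNIV :: 'd set) 4"
    and j: "j \<noteq> 0" "j * mu = mubar * j" and g: "g * mu = mubar * g"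
  shows "\<exists>z\<in>center. \<exists>w\<in>center. g = kelem z w * j"
proof -
  have "inverse j * (j * mubar) * inverse j = inverse j * (mu * j) * inverse j"
    by (simp add: mubar_intertwiner_sym[OF j(2)])
  then have ij: "inverse j * mu = mubar * inverse j"
    using j(1) by (simp add: mult.assoc[symmetric]) (simp add: mult.assoc)
  have "g * inverse j * mu = mu * (g * inverse j)"
    by (simp add: mult.assoc ij) (simp add: mult.assoc[symmetric] mubar_intertwiner_sym[OF g])
  then obtain z w where zw: "z \<in> center" "w \<in> center" "g * inverse j = kelem z w"
    using centralizer_eq_kelem[OF D_quat] by blast
  have "g = kelem z w * j"
    using j(1) zw(3)[symmetric] by (simp add: mult.assoc)
  with zw(1,2) show ?thesis by blast
qed

end

locale quaternion_basis = quadratic_element mu t n for mu t n :: "'d::division_ring" +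
  fixes j :: 'd
  assumes j_neq_0: "j \<noteq> 0" and j_intertwines: "j * mu = mubar * j"
    and j_square_center [simp]: "j * j \<in> center"
begin

lemma kelem_mult_j_commute_mu:
  assumes "z \<in> center" "w \<in> center" "kelem z w * j * mu = mu * (kelem z w * j)"
  shows "z = 0 \<and> w = 0"
proof -
  have "kelem z w * j = 0"
    using intertwiner_commuting_eq_0[OF kelem_mult_intertwiner[OF j_intertwines assms(1,2)] assms(3)] .
  then show ?thesis
    using j_neq_0 kelem_eq_0_iff[OF assms(1,2)] by simp
qed

lemma kelem_add_kelem_mult_j_eq_0:
  assumes c: "x \<in> center" "y \<in> center" "z \<in> center" "w \<in> center"
    and "kelem x y + kelem z w * j = 0"
  shows "z = 0 \<and> w = 0"
proof -
  have "kelem z w * j = - kelem x y"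
    using assms(5) by (simp add: eq_neg_iff_add_eq_0 add.commute)
  then have "kelem z w * j * mu = mu * (kelem z w * j)"
    using mu_kelem_commute[OF c(1,2)] by simp
  then show ?thesis
    using kelem_mult_j_commute_mu c(3,4) by blast
qed

lemma quaternion_conj_mult:
  assumes c: "x \<in> center" "y \<in> center" "z \<in> center" "w \<in> center"
  shows "(kconj x y - kelem z w * j) * (kelem x y + kelem z w * j) = knorm x y - j * j * knorm z w"
proof -
  have jk: "j * kelem a b = kconj a b * j" if "a \<in> center" "b \<in> center" for a b
    using intertwiner_kelem[OF j_intertwines that] .
  have 1: "kconj x y * (kelem z w * j) = kelem z w * (kconj x y * j)"
    using c by (simp add: mult.assoc[symmetric] kelem_commute kconj_eq_kelem)
  have 2: "kelem z w * j * kelem x y = kelem z w * (kconj x y * j)"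
    using c by (simp add: mult.assoc jk)
  have 3: "kelem z w * j * (kelem z w * j) = j * j * knorm z w"
  proof -
    have "kelem z w * j * (kelem z w * j) = kelem z w * (kconj z w * (j * j))"
      using c by (simp add: mult.assoc[symmetric]) (simp add: mult.assoc jk)
    also have "\<dots> = knorm z w * (j * j)"
      using c by (simp add: mult.assoc[symmetric] kelem_mult_kconj)
    finally show ?thesis
      using c by (simp add: center_mult_commute)
  qed
  have "(kconj x y - kelem z w * j) * (kelem x y + kelem z w * j) =
     kconj x y * kelem x y + kconj x y * (kelem z w * j) - kelem z w * j * kelem x y
       - kelem z w * j * (kelem z w * j)"
    by (simp add: algebra_simps)
  then show ?thesis
    unfolding 1 2 3 using c by (simp add: kconj_mult_kelem)
qed

lemma nrd_kelem_add_kelem_mult_j: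
  assumes c: "x \<in> center" "y \<in> center" "z \<in> center" "w \<in> center"
  shows "nrd (kelem x y + kelem z w * j) = knorm x y - j * j * knorm z w"
proof (cases "kelem x y + kelem z w * j \<in> center")
  case True
  then have "(kelem x y + kelem z w * j) * mu = mu * (kelem x y + kelem z w * j)"
    by (simp add: center_commute)
  then have "kelem z w * j * mu = mu * (kelem z w * j)"
    using c by (simp add: algebra_simps mu_kelem_commute)
  then have zw: "z = 0" "w = 0"
    using kelem_mult_j_commute_mu c by auto
  then have "y = 0"
    using True c kelem_in_center_iff by simp
  then show ?thesis
    using zw True by (simp add: nrd_center kelem_def knorm_def)
next
  case False
  let ?g = "kelem x y + kelem z w * j" and ?gc = "kconj x y - kelem z w * j"
  have trace: "?g + ?gc = 2 * x + y * t"
    by (simp add: kelem_def kconj_def mubar_def algebra_simps mult_2)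
  have "?g * ?g - (2 * x + y * t) * ?g + (knorm x y - j * j * knorm z w) = 0"
    unfolding trace[symmetric] quaternion_conj_mult[OF c, symmetric] by (simp add: algebra_simps)
  from nrd_trd_of_quadratic(1)[OF False _ _ this] c show ?thesis by simp
qed

text \<open>By \<open>quaternion_conj_mult\<close> a solution with \<open>(z, w) \<noteq> (0, 0)\<close> would give a zero divisor in \<open>D\<close>.\<close>
lemma knorm_anisotropic:
  assumes c: "s \<in> center" "x \<in> center" "y \<in> center" "z \<in> center" "w \<in> center"
    and eq: "s * s * knorm x y = j * j * knorm z w"
  shows "z = 0 \<and> w = 0"
proof -
  have sc: "s * x \<in> center" "s * y \<in> center"
    using c by simp_all
  have "knorm (s * x) (s * y) = s * s * knorm x y"
    using c by (simp add: knorm_def algebra_simps center_mult_commute center_mult_left_commute)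
  then have "(kconj (s * x) (s * y) - kelem z w * j) * (kelem (s * x) (s * y) + kelem z w * j) = 0"
    using quaternion_conj_mult[OF sc c(4,5)] eq by simp
  then consider "kconj (s * x) (s * y) - kelem z w * j = 0" | "kelem (s * x) (s * y) + kelem z w * j = 0"
    by auto
  then show ?thesis
  proof cases
    case 1
    moreover have "kelem (- z) (- w) = - kelem z w"
      by (simp add: kelem_def)
    ultimately have "kelem (s * x + s * y * t) (- (s * y)) + kelem (- z) (- w) * j = 0"
      by (simp add: kconj_eq_kelem)
    from kelem_add_kelem_mult_j_eq_0[OF _ _ _ _ this] c show ?thesis
      by simp
  next
    case 2
    then show ?thesis
      using kelem_add_kelem_mult_j_eq_0[OF sc c(4,5)] by blast
  qed
qed

end

section \<open>The absolute value of \<open>F\<close> and Hensel's lemma\<close>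

definition v_cauchy :: "('d::ab_group_add \<Rightarrow> real) \<Rightarrow> (nat \<Rightarrow> 'd) \<Rightarrow> bool" where
  "v_cauchy v s \<longleftrightarrow> (\<forall>e>0. \<exists>N. \<forall>m\<ge>N. \<forall>n\<ge>N. v (s m - s n) < e)"

definition v_tendsto :: "('d::ab_group_add \<Rightarrow> real) \<Rightarrow> (nat \<Rightarrow> 'd) \<Rightarrow> 'd \<Rightarrow> bool" where
  "v_tendsto v s l \<longleftrightarrow> (\<forall>e>0. \<exists>N. \<forall>n\<ge>N. v (s n - l) < e)"

locale local_field_abs =
  fixes v :: "'d::division_ring \<Rightarrow> real"
  assumes local_field: "nonarch_local_field center v"
begin

lemma v_nonneg: "x \<in> center \<Longrightarrow> 0 \<le> v x"
  using local_field by (simp add: nonarch_local_field_def)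

lemma v_eq_0_iff: "x \<in> center \<Longrightarrow> v x = 0 \<longleftrightarrow> x = 0"
  using local_field by (simp add: nonarch_local_field_def)

lemma v_mult: "x \<in> center \<Longrightarrow> y \<in> center \<Longrightarrow> v (x * y) = v x * v y"
  using local_field by (simp add: nonarch_local_field_def)

lemma v_add_le_max: "x \<in> center \<Longrightarrow> y \<in> center \<Longrightarrow> v (x + y) \<le> max (v x) (v y)"
  using local_field by (simp add: nonarch_local_field_def)

lemma v_0 [simp]: "v 0 = 0"
  using v_eq_0_iff[of 0] by simp

lemma v_eq_1_if_square_eq_1: "x \<in> center \<Longrightarrow> v (x * x) = 1 \<Longrightarrow> v x = 1"
  using v_mult[of x x] v_nonneg[of x] power2_eq_1_iff[of "v x"] by (simp add: power2_eq_square)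

lemma v_1 [simp]: "v 1 = 1"
proof -
  have "v 1 = v 1 * v 1" using v_mult[of 1 1] by simp
  moreover have "v 1 \<noteq> 0" using v_eq_0_iff[of 1] by simp
  ultimately show ?thesis by (metis mult_cancel_right1)
qed

lemma v_uminus: "x \<in> center \<Longrightarrow> v (- x) = v x"
  using v_mult[of "-1" x] v_eq_1_if_square_eq_1[of "-1"] by simp

lemma v_diff_le_max: "x \<in> center \<Longrightarrow> y \<in> center \<Longrightarrow> v (x - y) \<le> max (v x) (v y)"
  using v_add_le_max[of x "- y"] v_uminus[of y] by simp

lemma v_minus_commute: "x \<in> center \<Longrightarrow> y \<in> center \<Longrightarrow> v (x - y) = v (y - x)"
  using v_uminus[of "y - x"] by simp

lemma v_inverse:
  assumes "x \<in> center" "x \<noteq> 0"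
  shows "v (inverse x) = inverse (v x)"
proof -
  have "v (inverse x) * v x = 1"
    using v_mult[of "inverse x" x] assms by simp
  then show ?thesis by (metis inverse_unique mult.commute)
qed

lemma v_two_eq_1: "absD v 2 = 1 \<Longrightarrow> v 2 = 1"
  using v_eq_1_if_square_eq_1[of 2] by (simp add: absD_def nrd_center)

lemma v_cauchy_tendsto:
  assumes "\<And>k. s k \<in> center" "v_cauchy v s"
  shows "\<exists>l\<in>center. v_tendsto v s l"
  using local_field assms unfolding nonarch_local_field_def v_cauchy_def v_tendsto_def by blast

lemma v_cauchy_if_geometric_steps:
  assumes r: "0 \<le> r" "r < 1" and s: "\<And>k. s k \<in> center"
    and step: "\<And>k. v (s (Suc k) - s k) \<le> r ^ k"
  shows "v_cauchy v s"
proof -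
  have r_pow_mono: "r ^ N \<le> r ^ k" if "k \<le> N" for k N
    using power_decreasing[OF that r(1)] r(2) by simp
  have far: "v (s (k + m) - s k) \<le> r ^ k" for k m
  proof (induction m)
    case 0
    then show ?case using r(1) by simp
  next
    case (Suc m)
    have "v (s (k + Suc m) - s k) \<le> max (v (s (Suc (k + m)) - s (k + m))) (v (s (k + m) - s k))"
      using v_add_le_max[of "s (Suc (k + m)) - s (k + m)" "s (k + m) - s k"] s by simp
    then show ?case
      using Suc step[of "k + m"] r_pow_mono[of k "k + m"] by simp
  qed
  have close: "v (s m - s n) \<le> r ^ N" if "N \<le> m" "N \<le> n" for m n N
  proof (cases "n \<le> m")
    case True
    then show ?thesis
      using far[of n "m - n"] r_pow_mono[of N n] that by simp
  next
    case False
    then show ?thesis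
      using far[of m "n - m"] r_pow_mono[of N m] that v_minus_commute s by simp
  qed
  show ?thesis
    unfolding v_cauchy_def
  proof (intro allI impI)
    fix e :: real
    assume "e > 0"
    then obtain N where "r ^ N < e"
      using real_arch_pow_inv r(2) by blast
    then show "\<exists>N. \<forall>m\<ge>N. \<forall>n\<ge>N. v (s m - s n) < e"
      using close by (meson order.strict_trans1)
  qed
qed

lemma v_tendsto_if_geometric:
  assumes r: "0 \<le> r" "r < 1" and bound: "\<And>k. v (s k - l) \<le> r ^ k"
  shows "v_tendsto v s l"
  unfolding v_tendsto_def
proof (intro allI impI)
  fix e :: real
  assume "e > 0"
  then obtain N where "r ^ N < e"
    using real_arch_pow_inv r(2) by blast
  moreover have "v (s k - l) \<le> r ^ N" if "N \<le> k" for k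
    using bound[of k] power_decreasing[OF that r(1)] r(2) by simp
  ultimately show "\<exists>N. \<forall>k\<ge>N. v (s k - l) < e"
    by (meson order.strict_trans1)
qed

lemma v_tendsto_square_unique:
  assumes c: "l \<in> center" "u \<in> center" "\<And>k. s k \<in> center"
    and lim: "v_tendsto v s l" and bounded: "\<And>k. v (s k) \<le> 1"
    and sq: "v_tendsto v (\<lambda>k. s k * s k) u"
  shows "l * l = u"
proof (rule ccontr)
  assume "l * l \<noteq> u"
  define d where "d = v (l * l - u)"
  have "d > 0"
    using \<open>l * l \<noteq> u\<close> v_nonneg[of "l * l - u"] v_eq_0_iff[of "l * l - u"] c by (simp add: d_def)
  then obtain N1 N2 where N1: "\<forall>n\<ge>N1. v (s n - l) < min d 1" and N2: "\<forall>n\<ge>N2. v (s n * s n - u) < d"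
    using lim sq unfolding v_tendsto_def by (meson less_numeral_extra(1) min_less_iff_conj)
  define a where "a = s (max N1 N2)"
  have ac: "a \<in> center"
    using c by (simp add: a_def)
  have la: "v (l - a) < min d 1"
    using N1[rule_format, of "max N1 N2"] v_minus_commute[of a l] ac c by (simp add: a_def)
  have "v (l + a) \<le> 1"
  proof -
    have "v (l + a) \<le> max (v (l - a)) (v (a + a))"
      using v_add_le_max[of "l - a" "a + a"] ac c by simp
    moreover have "v (a + a) \<le> v a"
      using v_add_le_max[of a a] ac by simp
    ultimately show ?thesis
      using la bounded[of "max N1 N2"] by (simp add: a_def max_def split: if_splits)
  qed
  then have "v ((l - a) * (l + a)) \<le> v (l - a)"
    using v_mult[of "l - a" "l + a"] v_nonneg[of "l - a"] ac c by (simp add: mult_left_le)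
  then have "v ((l - a) * (l + a)) < d"
    using la by simp
  moreover have "v (a * a - u) < d"
    using N2 by (simp add: a_def)
  moreover have split: "l * l - u = (l - a) * (l + a) + (a * a - u)"
    using ac c by (simp add: algebra_simps center_mult_commute)
  have "v (l * l - u) \<le> max (v ((l - a) * (l + a))) (v (a * a - u))"
    unfolding split by (rule v_add_le_max) (use ac c in simp_all)
  ultimately have "v (l * l - u) < d"
    by simp
  then show False
    by (simp add: d_def)
qed

lemma newton_sqrt_step:
  assumes v2: "v 2 = 1" and c: "u \<in> center" "a \<in> center"
    and a1: "v (a - 1) \<le> r" and err: "v (a * a - u) \<le> \<epsilon>" "\<epsilon> \<le> r"
  defines "a' \<equiv> a - inverse 2 * (a * a - u)"
  shows "v (a' - 1) \<le> r" and "v (a' * a' - u) \<le> \<epsilon> * r" and "v (a' - a) \<le> \<epsilon>"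
proof -
  define h e where "h = inverse (2::'d)" and "e = a * a - u"
  have hc: "h \<in> center"
    unfolding h_def by (rule center_inverse) simp
  have ec: "e \<in> center"
    using c by (simp add: e_def)
  have "(2::'d) \<noteq> 0"
    using v2 by auto
  then have vh: "v h = 1" and h2: "2 * h = 1"
    using v_inverse[of 2] v2 by (simp_all add: h_def)
  have a': "a' = a - h * e"
    by (simp add: a'_def h_def e_def)
  have ve: "v (h * e) = v e"
    using v_mult hc ec vh by simp
  show "v (a' - a) \<le> \<epsilon>"
    using ve v_uminus[of "h * e"] hc ec err(1) by (simp add: a' e_def)
  show "v (a' - 1) \<le> r"
    using v_diff_le_max[of "a - 1" "h * e"] ve a1 err hc ec c by (simp add: a' e_def algebra_simps)
  have "a' * a' - u = e - (2 * h) * (a * e) + h * h * (e * e)"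
    using c hc ec by (simp add: a' e_def algebra_simps center_mult_commute center_mult_left_commute mult_2)
  also have "\<dots> = e * (1 - a) + h * h * (e * e)"
    using c ec by (simp add: h2 algebra_simps center_mult_commute)
  finally have id: "a' * a' - u = e * (1 - a) + h * h * (e * e)" .
  have "v (e * (1 - a)) \<le> \<epsilon> * r"
    using v_mult[of e "1 - a"] v_minus_commute[of a 1] v_nonneg[of e] v_nonneg[of "a - 1"] ec c a1 err
    by (simp add: e_def mult_mono)
  moreover have "v (h * h * (e * e)) \<le> \<epsilon> * r"
    using v_mult[of "h * h" "e * e"] v_mult[of h h] v_mult[of e e] v_nonneg[of e] hc ec vh err
    by (simp add: e_def mult_mono)
  ultimately show "v (a' * a' - u) \<le> \<epsilon> * r"
    using v_add_le_max[of "e * (1 - a)" "h * h * (e * e)"] c hc ec by (simp add: id)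
qed

lemma hensel_sqrt:
  assumes v2: "v 2 = 1" and u: "u \<in> center" "v (u - 1) < 1"
  shows "\<exists>s\<in>center. s * s = u"
proof -
  define r where "r = v (u - 1)"
  have r: "0 \<le> r" "r < 1"
    using u v_nonneg[of "u - 1"] by (simp_all add: r_def)
  define w where "w = rec_nat 1 (\<lambda>_ a. a - inverse 2 * (a * a - u))"
  have w_0: "w 0 = 1" and w_Suc: "w (Suc k) = w k - inverse 2 * (w k * w k - u)" for k
    by (simp_all add: w_def)
  have r_pow_le: "r ^ Suc k \<le> r" for k
    using power_decreasing[of 1 "Suc k" r] r by simp
  have approx: "w k \<in> center \<and> v (w k - 1) \<le> r \<and> v (w k * w k - u) \<le> r ^ Suc k" for k
  proof (induction k)
    case 0
    then show ?case
      using u r v_minus_commute[of 1 u] by (simp add: w_0 r_def)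
  next
    case (Suc k)
    then show ?case
      using newton_sqrt_step[OF v2 u(1), of "w k" r "r ^ Suc k"] r_pow_le[of k] u(1)
        center_inverse[of "2::'d"]
      by (simp add: w_Suc mult.commute)
  qed
  then have wc: "w k \<in> center" for k
    by blast
  have "v (w (Suc k) - w k) \<le> r ^ k" for k
    using newton_sqrt_step(3)[OF v2 u(1), of "w k" r "r ^ Suc k"] approx[of k] r_pow_le[of k]
      power_decreasing[of k "Suc k" r] r
    by (simp add: w_Suc)
  then obtain l where l: "l \<in> center" "v_tendsto v w l"
    using v_cauchy_tendsto[of w, OF wc v_cauchy_if_geometric_steps[of r w, OF r wc]] by blast
  have "v (w k * w k - u) \<le> r ^ k" for k
    using approx[of k] power_decreasing[of k "Suc k" r] r by simp
  then have "v_tendsto v (\<lambda>k. w k * w k) u"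
    by (rule v_tendsto_if_geometric[OF r])
  moreover have "v (w k) \<le> 1" for k
    using v_add_le_max[of "w k - 1" 1] approx[of k] r by simp
  ultimately have "l * l = u"
    using v_tendsto_square_unique[OF l(1) u(1) wc l(2)] by blast
  with l(1) show ?thesis by blast
qed

text \<open>If \<open>|A| = |B|\<close> then \<open>|A - B| < |A|\<close> would make \<open>B/A\<close> a unit congruent to \<open>1\<close>,
  hence a square by Hensel's lemma.\<close>
lemma v_diff_eq_max:
  assumes v2: "v 2 = 1" and AB: "A \<in> center" "B \<in> center"
    and not_square: "\<And>s. s \<in> center \<Longrightarrow> s * s * A = B \<Longrightarrow> A = 0 \<or> B = 0"
  shows "v (A - B) = max (v A) (v B)"
proof (cases "A = 0 \<or> B = 0")
  case True
  then show ?thesis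
    using AB v_nonneg v_uminus by auto
next
  case False
  then have A0: "A \<noteq> 0" and B0: "B \<noteq> 0" by auto
  have ub: "v (A - B) \<le> max (v A) (v B)"
    using v_diff_le_max AB by simp
  show ?thesis
  proof (cases "v A = v B")
    case False
    have "v B \<le> max (v A) (v (A - B))"
      using v_diff_le_max[of A "A - B"] AB by simp
    moreover have "v A \<le> max (v (A - B)) (v B)"
      using v_add_le_max[of "A - B" B] AB by simp
    ultimately show ?thesis
      using ub False by (auto simp: max_def split: if_splits)
  next
    case True
    define q where "q = B * inverse A"
    have qc: "q \<in> center"
      using AB by (simp add: q_def)
    have qA: "q * A = B"
      using A0 by (simp add: q_def mult.assoc)
    have vq: "v q = 1"
      using True A0 B0 AB v_eq_0_iff[of A] by (simp add: q_def v_mult v_inverse)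
    have "\<not> v (q - 1) < 1"
    proof
      assume "v (q - 1) < 1"
      then obtain s where "s \<in> center" "s * s = q"
        using hensel_sqrt[OF v2 qc] by blast
      then show False
        using not_square[of s] qA A0 B0 by simp
    qed
    moreover have "v (1 - q) \<le> 1"
      using v_diff_le_max[of 1 q] qc vq by simp
    ultimately have "v (1 - q) = 1"
      using v_minus_commute[of 1 q] qc by simp
    moreover have "A - B = (1 - q) * A"
      using qA by (simp add: algebra_simps)
    ultimately have "v (A - B) = v A"
      using v_mult[of "1 - q" A] qc AB by simp
    then show ?thesis
      using True by simp
  qed
qed

end

section \<open>The absolute value on \<open>D\<^sup>+ \<oplus> D\<^sup>-\<close>\<close>

context quaternion_basis
begin

lemma absD_kelem_add_kelem_mult_j:
  assumes local: "nonarch_local_field center v" and v2: "v 2 = 1"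
    and c: "x \<in> center" "y \<in> center" "z \<in> center" "w \<in> center"
  shows "absD v (kelem x y + kelem z w * j) = max (absD v (kelem x y)) (absD v (kelem z w * j))"
proof -
  interpret local_field_abs v
    by (rule local_field_abs.intro[OF local])
  have "absD v (kelem x y + kelem z w * j) = v (knorm x y - j * j * knorm z w)"
    using nrd_kelem_add_kelem_mult_j[OF c] by (simp add: absD_def)
  moreover have "absD v (kelem x y) = v (knorm x y)"
    using nrd_kelem_add_kelem_mult_j[of x y 0 0] c by (simp add: absD_def knorm_def)
  moreover have "absD v (kelem z w * j) = v (j * j * knorm z w)"
    using nrd_kelem_add_kelem_mult_j[of 0 0 z w] c v_uminus[of "j * j * knorm z w"]
    by (simp add: absD_def knorm_def)
  moreover have "v (knorm x y - j * j * knorm z w) = max (v (knorm x y)) (v (j * j * knorm z w))"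
  proof (rule v_diff_eq_max[OF v2])
    fix s
    assume "s \<in> center" "s * s * knorm x y = j * j * knorm z w"
    then have "z = 0 \<and> w = 0"
      using knorm_anisotropic c by blast
    then show "knorm x y = 0 \<or> j * j * knorm z w = 0"
      by (simp add: knorm_def)
  qed (use c in simp_all)
  ultimately show ?thesis
    by simp
qed

end

theorem mainTheorem7:
  fixes v :: "'d::division_ring \<Rightarrow> real" and K :: "'d set" and \<mu> :: 'd
  assumes F_local: "nonarch_local_field center v"
    and D_quat: "has_dim_over center (UNIV :: 'd set) 4"
    and K_sub: "center \<subseteq> K"
    and K_field: "\<forall>x\<in>K. \<forall>y\<in>K. x + y \<in> K \<and> x * y \<in> K \<and> - x \<in> K \<and> inverse x \<in> K"
    and K_quad: "has_dim_over center K 2"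
    and mu: "\<mu> \<in> K" "\<mu> \<notin> center"
    and two: "absD v 2 = 1"
  shows "\<forall>\<gamma> gp gm. gp \<in> Dplus \<mu> \<and> gm \<in> Dminus \<mu> \<and> \<gamma> = gp + gm \<longrightarrow>
           absD v \<gamma> = max (absD v gp) (absD v gm)"
proof (intro allI impI, elim conjE)
  fix \<gamma> gp gm
  assume gp: "gp \<in> Dplus \<mu>" and gm: "gm \<in> Dminus \<mu>" and \<gamma>: "\<gamma> = gp + gm"
  interpret local_field_abs v
    by (rule local_field_abs.intro[OF F_local])
  have v2: "v 2 = 1"
    using v_two_eq_1[OF two] .
  obtain t n where tn: "t \<in> center" "n \<in> center" "\<mu> * \<mu> = t * \<mu> - n"
    using quadratic_relation_of_dim_2[OF K_sub K_field K_quad mu] by blast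
  interpret quadratic_element \<mu> t n
    using tn mu(2) v2 by unfold_locales auto
  obtain j where j: "j \<noteq> 0" "j * \<mu> = mubar * j" "j * j \<in> center"
    using exists_quaternion_basis[OF D_quat] by blast
  interpret quaternion_basis \<mu> t n j
    using j by unfold_locales
  have "gp * \<mu> = \<mu> * gp"
    using gp by (simp add: Dplus_def)
  then obtain x y where xy: "x \<in> center" "y \<in> center" "gp = kelem x y"
    using centralizer_eq_kelem[OF D_quat] by blast
  have "gm * \<mu> = mubar * gm"
    using gm by (simp add: Dminus_def qconj_mu)
  then obtain z w where zw: "z \<in> center" "w \<in> center" "gm = kelem z w * j"
    using anticommutant_eq_kelem_mult[OF D_quat j(1,2)] by blast
  show "absD v \<gamma> = max (absD v gp) (absD v gm)"
    unfolding \<gamma> xy(3) zw(3) by (rule absD_kelem_add_kelem_mult_j[OF F_local v2 xy(1,2) zw(1,2)])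
qed

end
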